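(* Let $m\ge 2$ be an integer and let $n$ be a positive integer with $m^j\le n<m^{j+1}$ for some integer $j\ge 0$. Write the base $m$ representation of $n$ as $n=\alpha_j m^j+\alpha_{j-1}m^{j-1}+\cdots+\alpha_1 m+\alpha_0$ with $\alpha_j>0$ and $0\le \alpha_i\le m-1$ for $0\le i\le j$. Then there is a one-to-one correspondence between the set $\mathcal{B}_m(n)$ of $m$-ary partitions of $n$ and the set of integer sequences \[ \mathcal{S}_m(n)=\{(\beta_j,\beta_{j-1},\ldots,\beta_1)\,:\,0\le \beta_j\le \alpha_j \text{ and } 0\le \beta_t\le \alpha_t+m\beta_{t+1}\text{ for } 1\le t\le j-1\}. \]
   Context: An $m$-ary partition of a positive integer $n$ is a partition of $n$ in which every part is a power of $m$ (i.e. $1,m,m^2,\ldots$). Equivalently, it is a sequence $(a_\ell,a_{\ell-1},\ldots,a_0)$ of integers with $a_\ell>0$, $a_i\ge 0$ for $0\le i\le \ell-1$, and $n=a_\ell m^\ell+\cdots+a_1 m+a_0$ ($a_i$ being the number of parts equal to $m^i$). $\mathcal{B}_m(n)$ denotes the set of all $m$-ary partitions of $n$. *)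

theory Defs
  imports Main
begin

text \<open>An m-ary partition of n, encoded as the list [a_0, a_1, ..., a_l] of multiplicities
  (a_i = number of parts equal to m^i), with a_l > 0 and n = sum a_i m^i.\<close>
definition mary_partitions :: "nat \<Rightarrow> nat \<Rightarrow> nat list set" where
  "mary_partitions m n =
     {as. as \<noteq> [] \<and> last as > 0 \<and> (\<Sum>i<length as. as ! i * m ^ i) = n}"

definition digit :: "nat \<Rightarrow> nat \<Rightarrow> nat \<Rightarrow> nat" where
  "digit m n i = (n div m ^ i) mod m"

text \<open>The set S_m(n) for n with m^j <= n < m^(j+1); a sequence (beta_j, ..., beta_1) is
  encoded as the list bs of length j with bs ! (t - 1) = beta_t.\<close>
definition seqs_S :: "nat \<Rightarrow> nat \<Rightarrow> nat \<Rightarrow> nat list set" where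
  "seqs_S m n j =
     {bs. length bs = j
          \<and> (1 \<le> j \<longrightarrow> bs ! (j - 1) \<le> digit m n j)
          \<and> (\<forall>t. 1 \<le> t \<and> t \<le> j - 1 \<longrightarrow> bs ! (t - 1) \<le> digit m n t + m * bs ! t)}"

end

theory Submission
  imports Defs "HOL-Library.More_List"
begin

text \<open>Represent a partition by the multiplicity function a, a i being the number of parts m^i,
  and attach to it the carries \<beta>_t = (\<Sum>i<t. a i * m^i) div m^t, the number of units m^t
  made up by the parts below m^t. Splitting n div m^t = \<alpha>_t + m * (n div m^(t+1)) into the
  contributions of the parts above and below m^t yields \<beta>_t + a_t = \<alpha>_t + m * \<beta>_(t+1), with
  \<beta>_0 = \<beta>_(j+1) = 0. Conversely every such carry sequence with
  \<beta>_t \<le> \<alpha>_t + m * \<beta>_(t+1) determines the partition a_t = \<alpha>_t + m * \<beta>_(t+1) - \<beta>_t,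
  and these inequalities are exactly the ones cutting out S_m(n).\<close>

lemma div_power_Suc_digit: "n div m ^ t = digit m n t + m * (n div m ^ Suc t)"
proof -
  have "n div m ^ Suc t = (n div m ^ t) div m"
    by (simp only: power_Suc2 div_mult2_eq)
  then show ?thesis unfolding digit_def by simp
qed

lemma mary_partition_length_le:
  assumes "as \<in> mary_partitions m n" "1 < m" "n < m ^ Suc j"
  shows "length as \<le> Suc j"
proof -
  define k where "k = length as - 1"
  have ne: "as \<noteq> []" and last: "last as > 0" and sum: "(\<Sum>i<length as. as ! i * m ^ i) = n"
    using assms(1) by (auto simp: mary_partitions_def)
  have k: "k < length as" "as ! k = last as" using ne by (simp_all add: k_def last_conv_nth)
  have "m ^ k \<le> as ! k * m ^ k" using last k by simp
  also have "\<dots> \<le> (\<Sum>i<length as. as ! i * m ^ i)"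
    using k by (intro member_le_sum) auto
  finally have "m ^ k < m ^ Suc j" using sum assms(3) by simp
  then have "k < Suc j" using power_strict_increasing_iff[OF assms(2)] by blast
  then show ?thesis by (simp add: k_def)
qed

lemma sum_nth_default_eq:
  fixes as :: "nat list"
  assumes "length as \<le> Suc j"
  shows "(\<Sum>i<length as. as ! i * m ^ i) = (\<Sum>i\<le>j. nth_default 0 as i * m ^ i)"
proof -
  have "(\<Sum>i<length as. as ! i * m ^ i) = (\<Sum>i<length as. nth_default 0 as i * m ^ i)"
    by (simp add: nth_default_nth)
  also have "\<dots> = (\<Sum>i\<le>j. nth_default 0 as i * m ^ i)"
    using assms by (intro sum.mono_neutral_left) (auto simp: nth_default_beyond)
  finally show ?thesis .
qed

definition mary_partition_funs :: "nat \<Rightarrow> nat \<Rightarrow> nat \<Rightarrow> (nat \<Rightarrow> nat) set" where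
  "mary_partition_funs m n j = {a. (\<forall>i>j. a i = 0) \<and> (\<Sum>i\<le>j. a i * m ^ i) = n}"

lemma bij_betw_nth_default_mary_partitions:
  assumes "1 < m" "0 < n" "n < m ^ Suc j"
  shows "bij_betw (nth_default 0) (mary_partitions m n) (mary_partition_funs m n j)"
proof (rule bij_betw_imageI)
  have no_trailing: "no_trailing ((=) 0) as" if "as \<in> mary_partitions m n" for as
    using that by (simp add: mary_partitions_def no_trailing_unfold)
  show "inj_on (nth_default 0) (mary_partitions m n)"
    by (rule inj_onI) (metis nth_default_eq_iff no_trailing strip_while_idem)
  show "nth_default 0 ` mary_partitions m n = mary_partition_funs m n j"
  proof (intro equalityI subsetI)
    fix a assume "a \<in> nth_default 0 ` mary_partitions m n"
    then obtain as where as: "as \<in> mary_partitions m n" and a: "a = nth_default 0 as" by blast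
    have "length as \<le> Suc j" using mary_partition_length_le[OF as assms(1,3)] .
    with as show "a \<in> mary_partition_funs m n j"
      by (auto simp: a mary_partition_funs_def mary_partitions_def sum_nth_default_eq
          nth_default_beyond)
  next
    fix a assume a: "a \<in> mary_partition_funs m n j"
    define as where "as = strip_while ((=) 0) (map a [0..<Suc j])"
    have "nth_default 0 as = nth_default 0 (map a [0..<Suc j])"
      by (simp add: as_def del: upt_Suc)
    also have "\<dots> = a"
      using a by (auto simp: mary_partition_funs_def nth_default_def fun_eq_iff simp del: upt_Suc)
    finally have a_eq: "nth_default 0 as = a" .
    have "length as \<le> Suc j"
      unfolding as_def using length_strip_while_le[of "(=) 0" "map a [0..<Suc j]"] by simp
    then have sum: "(\<Sum>i<length as. as ! i * m ^ i) = n"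
      using a by (simp add: sum_nth_default_eq a_eq mary_partition_funs_def)
    then have "as \<noteq> []" using assms(2) by auto
    moreover have "no_trailing ((=) 0) as" by (simp add: as_def)
    ultimately have "as \<in> mary_partitions m n"
      using sum by (simp add: mary_partitions_def no_trailing_unfold)
    then show "a \<in> nth_default 0 ` mary_partitions m n" using a_eq by blast
  qed
qed

definition upper_weight :: "nat \<Rightarrow> nat \<Rightarrow> (nat \<Rightarrow> nat) \<Rightarrow> nat \<Rightarrow> nat" where
  "upper_weight m j a t = (\<Sum>i\<in>{t..j}. a i * m ^ (i - t))"

definition carry :: "nat \<Rightarrow> (nat \<Rightarrow> nat) \<Rightarrow> nat \<Rightarrow> nat" where
  "carry m a t = (\<Sum>i<t. a i * m ^ i) div m ^ t"

lemma upper_weight_Suc_top [simp]: "upper_weight m j a (Suc j) = 0"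
  by (simp add: upper_weight_def)

lemma upper_weight_rec:
  assumes "t \<le> j"
  shows "upper_weight m j a t = a t + m * upper_weight m j a (Suc t)"
proof -
  have "m * upper_weight m j a (Suc t) = (\<Sum>i\<in>{Suc t..j}. a i * m ^ (i - t))"
    unfolding upper_weight_def sum_distrib_left
    by (intro sum.cong) (auto simp: Suc_diff_Suc[symmetric])
  moreover have "{t..j} = insert t {Suc t..j}" using assms by auto
  ultimately show ?thesis by (simp add: upper_weight_def)
qed

lemma sum_split_upper_weight:
  assumes "t \<le> Suc j"
  shows "(\<Sum>i\<le>j. a i * m ^ i) = (\<Sum>i<t. a i * m ^ i) + m ^ t * upper_weight m j a t"
proof -
  have "{..j} = {..<t} \<union> {t..j}" using assms by auto
  then have "(\<Sum>i\<le>j. a i * m ^ i) = (\<Sum>i<t. a i * m ^ i) + (\<Sum>i\<in>{t..j}. a i * m ^ i)"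
    by (simp add: sum.union_disjoint ivl_disj_int)
  moreover have "a i * m ^ i = m ^ t * (a i * m ^ (i - t))" if "t \<le> i" for i
    using that by (simp add: power_add[symmetric])
  ultimately show ?thesis by (simp add: upper_weight_def sum_distrib_left)
qed

lemma div_power_eq_upper_weight_plus_carry:
  assumes "a \<in> mary_partition_funs m n j" "0 < m" "t \<le> Suc j"
  shows "n div m ^ t = upper_weight m j a t + carry m a t"
proof -
  have "n = (\<Sum>i<t. a i * m ^ i) + upper_weight m j a t * m ^ t"
    using assms(1) sum_split_upper_weight[OF assms(3)]
    by (simp add: mary_partition_funs_def mult.commute)
  then show ?thesis using assms(2) by (simp add: carry_def)
qed

lemma carry_beyond:
  assumes "a \<in> mary_partition_funs m n j" "0 < m" "n < m ^ Suc j" "j < t"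
  shows "carry m a t = 0"
proof -
  have "(\<Sum>i<t. a i * m ^ i) = (\<Sum>i\<le>j. a i * m ^ i)"
    using assms(1,4) by (intro sum.mono_neutral_right) (auto simp: mary_partition_funs_def)
  moreover have "m ^ Suc j \<le> m ^ t" using assms(2,4) by (intro power_increasing) auto
  ultimately show ?thesis using assms(1,3) by (simp add: carry_def mary_partition_funs_def)
qed

lemma carry_recurrence:
  assumes "a \<in> mary_partition_funs m n j" "0 < m" "t \<le> j"
  shows "carry m a t + a t = digit m n t + m * carry m a (Suc t)"
proof -
  have "upper_weight m j a t + carry m a t = digit m n t + m * (n div m ^ Suc t)"
    using assms div_power_Suc_digit[of n m t] by (simp add: div_power_eq_upper_weight_plus_carry)
  moreover have "n div m ^ Suc t = upper_weight m j a (Suc t) + carry m a (Suc t)"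
    using assms by (intro div_power_eq_upper_weight_plus_carry) auto
  ultimately show ?thesis using upper_weight_rec[OF assms(3)] by (simp add: algebra_simps)
qed

definition carry_sequences :: "nat \<Rightarrow> nat \<Rightarrow> nat \<Rightarrow> (nat \<Rightarrow> nat) set" where
  "carry_sequences m n j =
     {b. b 0 = 0 \<and> (\<forall>t>j. b t = 0) \<and> (\<forall>t\<le>j. b t \<le> digit m n t + m * b (Suc t))}"

definition parts_of_carries :: "nat \<Rightarrow> nat \<Rightarrow> nat \<Rightarrow> (nat \<Rightarrow> nat) \<Rightarrow> nat \<Rightarrow> nat" where
  "parts_of_carries m n j b t = (if t \<le> j then digit m n t + m * b (Suc t) - b t else 0)"

lemma carry_in_carry_sequences:
  assumes "a \<in> mary_partition_funs m n j" "0 < m" "n < m ^ Suc j"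
  shows "carry m a \<in> carry_sequences m n j"
  using assms carry_beyond carry_recurrence[OF assms(1,2)]
  by (fastforce simp: carry_sequences_def carry_def)

lemma parts_of_carries_carry:
  assumes "a \<in> mary_partition_funs m n j" "0 < m"
  shows "parts_of_carries m n j (carry m a) = a"
proof
  fix t
  show "parts_of_carries m n j (carry m a) t = a t"
    using carry_recurrence[OF assms, of t] assms(1)
    by (auto simp: parts_of_carries_def mary_partition_funs_def)
qed

lemma upper_weight_parts_of_carries:
  assumes "b \<in> carry_sequences m n j" "n < m ^ Suc j" "t \<le> Suc j"
  shows "upper_weight m j (parts_of_carries m n j b) t + b t = n div m ^ t"
  using assms(3)
proof (induction t rule: inc_induct)
  case base
  then show ?case using assms(1,2) by (simp add: carry_sequences_def)
next
  case (step t)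
  define p where "p = parts_of_carries m n j b"
  have "t \<le> j" using step by simp
  then have "p t + b t = digit m n t + m * b (Suc t)"
    using assms(1) by (simp add: p_def parts_of_carries_def carry_sequences_def)
  then have "upper_weight m j p t + b t = digit m n t + m * (upper_weight m j p (Suc t) + b (Suc t))"
    using upper_weight_rec[OF \<open>t \<le> j\<close>] by (simp add: algebra_simps)
  also have "\<dots> = n div m ^ t"
    using step.IH div_power_Suc_digit[of n m t] by (simp add: p_def)
  finally show ?case by (simp add: p_def)
qed

lemma parts_of_carries_in_mary_partition_funs:
  assumes "b \<in> carry_sequences m n j" "n < m ^ Suc j"
  shows "parts_of_carries m n j b \<in> mary_partition_funs m n j"
  using upper_weight_parts_of_carries[OF assms, of 0] assms(1)
  by (simp add: mary_partition_funs_def parts_of_carries_def carry_sequences_def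
      upper_weight_def atLeast0AtMost)

lemma carry_parts_of_carries:
  assumes "b \<in> carry_sequences m n j" "0 < m" "n < m ^ Suc j"
  shows "carry m (parts_of_carries m n j b) = b"
proof
  fix t
  let ?a = "parts_of_carries m n j b"
  have a: "?a \<in> mary_partition_funs m n j"
    using parts_of_carries_in_mary_partition_funs[OF assms(1,3)] .
  show "carry m ?a t = b t"
  proof (cases "t \<le> Suc j")
    case True
    then show ?thesis
      using div_power_eq_upper_weight_plus_carry[OF a assms(2) True]
        upper_weight_parts_of_carries[OF assms(1,3) True] by simp
  next
    case False
    then show ?thesis using carry_beyond[OF a assms(2,3)] assms(1)
      by (simp add: carry_sequences_def)
  qed
qed

lemma bij_betw_carry:
  assumes "0 < m" "n < m ^ Suc j"
  shows "bij_betw (carry m) (mary_partition_funs m n j) (carry_sequences m n j)"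
  using assms carry_in_carry_sequences parts_of_carries_in_mary_partition_funs
    parts_of_carries_carry carry_parts_of_carries
  by (intro bij_betw_byWitness[where f' = "parts_of_carries m n j"]) auto

lemma bij_betw_carry_sequences_seqs_S:
  "bij_betw (\<lambda>b. map (b \<circ> Suc) [0..<j]) (carry_sequences m n j) (seqs_S m n j)"
proof (rule bij_betw_byWitness[where f' = "\<lambda>bs. nth_default 0 (0 # bs)"])
  show "\<forall>b\<in>carry_sequences m n j. nth_default 0 (0 # map (b \<circ> Suc) [0..<j]) = b"
    by (auto simp: carry_sequences_def nth_default_def fun_eq_iff nth_Cons split: nat.split)
  show "\<forall>bs\<in>seqs_S m n j. map (nth_default 0 (0 # bs) \<circ> Suc) [0..<j] = bs"
    by (auto simp: seqs_S_def nth_default_def intro: nth_equalityI)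
  show "(\<lambda>b. map (b \<circ> Suc) [0..<j]) ` carry_sequences m n j \<subseteq> seqs_S m n j"
    by (auto simp: carry_sequences_def seqs_S_def)
  show "(\<lambda>bs. nth_default 0 (0 # bs)) ` seqs_S m n j \<subseteq> carry_sequences m n j"
  proof (intro subsetI, elim imageE)
    fix bs b assume bs: "bs \<in> seqs_S m n j" and b: "b = nth_default 0 (0 # bs)"
    have b_Suc: "b (Suc t) = (if t < j then bs ! t else 0)" for t
      using bs by (simp add: b seqs_S_def nth_default_def)
    have b_pos: "b t = bs ! (t - 1)" if "0 < t" "t \<le> j" for t
      using that b_Suc[of "t - 1"] by (cases t) auto
    have "b t \<le> digit m n t + m * b (Suc t)" if "t \<le> j" for t
    proof -
      consider "t = 0" | "t = j" "0 < t" | "1 \<le> t" "t \<le> j - 1"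
        using \<open>t \<le> j\<close> by linarith
      then show ?thesis
      proof cases
        case 1
        then show ?thesis by (simp add: b)
      next
        case 2
        then show ?thesis using bs by (simp add: b_pos b_Suc seqs_S_def)
      next
        case 3
        then have "t < j" by simp
        then show ?thesis using 3 bs by (simp add: b_pos b_Suc seqs_S_def)
      qed
    qed
    moreover have "b t = 0" if "j < t" for t
      using that b_Suc[of "t - 1"] by (cases t) auto
    ultimately show "b \<in> carry_sequences m n j"
      by (simp add: carry_sequences_def b)
  qed
qed

theorem theorem1p1:
  fixes m n j :: nat
  assumes "m \<ge> 2" and "n > 0" and "m ^ j \<le> n" and "n < m ^ (j + 1)"
  shows "\<exists>f. bij_betw f (mary_partitions m n) (seqs_S m n j)"
proof -
  have "bij_betw (nth_default 0) (mary_partitions m n) (mary_partition_funs m n j)"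
    using assms(1,2,4) by (intro bij_betw_nth_default_mary_partitions) auto
  moreover have "bij_betw (carry m) (mary_partition_funs m n j) (carry_sequences m n j)"
    using assms(1,4) by (intro bij_betw_carry) auto
  ultimately have "bij_betw (carry m \<circ> nth_default 0) (mary_partitions m n) (carry_sequences m n j)"
    by (rule bij_betw_trans)
  then show ?thesis using bij_betw_trans[OF _ bij_betw_carry_sequences_seqs_S] by blast
qed

end
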